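(* There exist instances of CLC choice and a valid order-price pair $(\pi,\mathbf p)$ for such an instance such that $\mathbf p$ is not a local Nash equilibrium.
   Context: CLC setup. There are $N$ sellers $\mathcal N=\{1,\dots,N\}$, each selling one item, and a unit mass of customers, each buying at most one item. Items have a price attribute (indexed $0$) and $K$ non-price attributes indexed by $\mathcal A=\{1,\dots,K\}$; $\bar{\mathcal A}=\{0\}\cup\mathcal A$. Non-price attribute $k$ takes values in an arbitrary set $\mathcal V^k$; prices lie in $\mathcal V=[0,\bar v]$ for a fixed $\bar v>0$. Seller $i$'s item has fixed non-price attribute values $v_i^k\in\mathcal V^k$ and price $p_i\in\mathcal V$ chosen by seller $i$; $\mathbf p=(p_1,\dots,p_N)$, and $v_i^0:=p_i$. Each customer $c$ has: a strict total order $\succ_c$ on $\bar{\mathcal A}$ (attribute importance); for each attribute $k$ a complete transitive weak preference $\succsim_c^k$ on its value set, with strict part $\succ_c^k$ and indifference $\sim_c^k$ (and $v\sim_c^k v$), where for price $p\succ_c^0p'$ iff $p<p'$ and $p\sim_c^0p'$ iff $p=p'$; a willingness-to-pay $w_c\in[0,\bar v]$; a set $\mathcal C_c\subseteq\mathcal V^1\times\cdots\times\mathcal V^K$ of admissible non-price attribute vectors; and a strict tie-breaking order over sellers. Customer $c$ lexicographically prefers item $i$ to item $j$ if there is an attribute $k$ with $v_i^{k'}\sim_c^{k'}v_j^{k'}$ for all $k'\succ_c k$ and $v_i^k\succ_c^k v_j^k$; if no such $k$ exists, the tie-breaking order decides. Under the Consider-then-Choose with Lexicographic Choice (CLC) model,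 customer $c$ forms the consideration set $\mathcal N_c=\{i\in\mathcal N: p_i\le w_c,\ (v_i^1,\dots,v_i^K)\in\mathcal C_c\}$, buys nothing if it is empty, and otherwise buys the top-ranked item of $\mathcal N_c$ under this lexicographic order (with tie-breaking). An instance of CLC choice is a joint distribution $\mathcal G$ of these customer primitives; the conditional distribution of $w_c$ given the other primitives is assumed to have a Lipschitz continuous density. $D_i(\mathbf p)$ is the probability a customer buys from seller $i$ and $R_i(\mathbf p)=p_iD_i(\mathbf p)$ is seller $i$'s revenue, also written $R_i(p_i,\mathbf p_{-i})$. Local Nash equilibrium (LNE): $\mathbf p$ with $p_i\in\mathcal V$ for all $i$ such that there exist open neighborhoods $\mathcal U_i\subseteq\mathbb R$ with $p_i\in\mathcal U_i$ and $p_i\in\arg\max_{p\in\overline{\mathcal U_i}}R_i(p,\mathbf p_{-i})$ for all $i$ ($\overline{\mathcal U}$ is the closure). Notation: for $\mathcal S\subseteq\mathcal N$, $\mathbf p^{\mathcal S}$ is the price vector keeping the prices of sellers in $\mathcal S$ and setting the prices of all sellers outside $\mathcal S$ to $0$; $p^{\min}(\mathcal S)=\min_{j\in\mathcal S}p_j$, with $p^{\min}(\emptyset)=\bar v$. Valid order-price pair (VOP): a pair $(\pi,\mathbf p)$ where $\pi:[N]\to\mathcal N$ is a bijection ($\pi(l)$ is the seller of rank $l$) and $\mathbf p\in\mathcal V^N$ satisfies (1) $0\le p_{\pi(N)}\le\cdots\le p_{\pi(1)}\le\bar v$, and (2) letting $\mathcal S_1=\emptyset$ and $\mathcal S_l=\{\pi(j):j<l\}$,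 for every $l$ the price $p_{\pi(l)}$ is a local maximum of $p\mapsto R_{\pi(l)}(p,\mathbf p^{\mathcal S_l}_{-\pi(l)})$ on the interval $[0,p^{\min}(\mathcal S_l)]$. *)

theory Defs
  imports "HOL-Analysis.Analysis"
begin

text \<open>
Sellers are indexed by 0..N-1 (nS), attributes by 0..K (0 = price, 1..K non-price). Customers are described by finitely many
segments s < nseg (non-price primitives, with probability weight wt s); conditionally on
segment s the willingness-to-pay w has density dens s on [0, vbar], required to be
Lipschitz continuous there.
\<close>

record clc_instance =
  nS   :: nat
  nK   :: nat
  vbar :: real
  attr :: "nat \<Rightarrow> nat \<Rightarrow> real"
  nseg :: nat
  wt   :: "nat \<Rightarrow> real"
  aord :: "nat \<Rightarrow> nat list"                   \<comment> \<open>attribute importance, most important first\<close>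
  pref :: "nat \<Rightarrow> nat \<Rightarrow> real \<Rightarrow> real \<Rightarrow> bool"
  adm  :: "nat \<Rightarrow> real list set"
  tb   :: "nat \<Rightarrow> nat list"                   \<comment> \<open>tie-breaking order on sellers, best first\<close>
  dens :: "nat \<Rightarrow> real \<Rightarrow> real"

definition before :: "'a list \<Rightarrow> 'a \<Rightarrow> 'a \<Rightarrow> bool" where
  "before xs x y \<longleftrightarrow> (\<exists>a b. a < b \<and> b < length xs \<and> xs ! a = x \<and> xs ! b = y)"

definition valid_clc :: "clc_instance \<Rightarrow> bool" where
  "valid_clc I \<longleftrightarrow>
     0 < nS I \<and> 0 < vbar I \<and>
     (\<forall>s<nseg I. 0 \<le> wt I s) \<and> (\<Sum>s<nseg I. wt I s) = 1 \<and>
     (\<forall>s<nseg I.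
        distinct (aord I s) \<and> set (aord I s) = {0..nK I} \<and>
        (\<forall>k\<in>{1..nK I}. (\<forall>a b. pref I s k a b \<or> pref I s k b a) \<and>
                         (\<forall>a b c. pref I s k a b \<longrightarrow> pref I s k b c \<longrightarrow> pref I s k a c)) \<and>
        distinct (tb I s) \<and> set (tb I s) = {..<nS I} \<and>
        (\<forall>w\<in>{0..vbar I}. 0 \<le> dens I s w) \<and>
        (dens I s has_integral 1) {0..vbar I} \<and>
        (\<exists>L. L-lipschitz_on {0..vbar I} (dens I s)))"

definition aval :: "clc_instance \<Rightarrow> (nat \<Rightarrow> real) \<Rightarrow> nat \<Rightarrow> nat \<Rightarrow> real" where
  "aval I p i k = (if k = 0 then p i else attr I i k)"

definition sbetter :: "clc_instance \<Rightarrow> nat \<Rightarrow> nat \<Rightarrow> real \<Rightarrow> real \<Rightarrow> bool" where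
  "sbetter I s k a b \<longleftrightarrow> (if k = 0 then a < b else pref I s k a b \<and> \<not> pref I s k b a)"

definition indiff :: "clc_instance \<Rightarrow> nat \<Rightarrow> nat \<Rightarrow> real \<Rightarrow> real \<Rightarrow> bool" where
  "indiff I s k a b \<longleftrightarrow> (if k = 0 then a = b else pref I s k a b \<and> pref I s k b a)"

definition lex_prefers :: "clc_instance \<Rightarrow> nat \<Rightarrow> (nat \<Rightarrow> real) \<Rightarrow> nat \<Rightarrow> nat \<Rightarrow> bool" where
  "lex_prefers I s p i j \<longleftrightarrow>
     (\<exists>k\<in>{0..nK I}.
        (\<forall>k'. before (aord I s) k' k \<longrightarrow> indiff I s k' (aval I p i k') (aval I p j k')) \<and>
        sbetter I s k (aval I p i k) (aval I p j k))"

definition ranked_above :: "clc_instance \<Rightarrow> nat \<Rightarrow> (nat \<Rightarrow> real) \<Rightarrow> nat \<Rightarrow> nat \<Rightarrow> bool" where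
  "ranked_above I s p i j \<longleftrightarrow>
     lex_prefers I s p i j \<or> (\<not> lex_prefers I s p j i \<and> before (tb I s) i j)"

definition consider_set :: "clc_instance \<Rightarrow> nat \<Rightarrow> real \<Rightarrow> (nat \<Rightarrow> real) \<Rightarrow> nat set" where
  "consider_set I s w p =
     {i. i < nS I \<and> p i \<le> w \<and> map (attr I i) [1..<nK I + 1] \<in> adm I s}"

definition buys :: "clc_instance \<Rightarrow> nat \<Rightarrow> real \<Rightarrow> (nat \<Rightarrow> real) \<Rightarrow> nat \<Rightarrow> bool" where
  "buys I s w p i \<longleftrightarrow> i \<in> consider_set I s w p \<and>
     (\<forall>j\<in>consider_set I s w p. j \<noteq> i \<longrightarrow> ranked_above I s p i j)"

definition demand :: "clc_instance \<Rightarrow> (nat \<Rightarrow> real) \<Rightarrow> nat \<Rightarrow> real" where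
  "demand I p i = (\<Sum>s<nseg I. wt I s * integral {w\<in>{0..vbar I}. buys I s w p i} (dens I s))"

definition revenue :: "clc_instance \<Rightarrow> (nat \<Rightarrow> real) \<Rightarrow> nat \<Rightarrow> real" where
  "revenue I p i = p i * demand I p i"

definition is_LNE :: "clc_instance \<Rightarrow> (nat \<Rightarrow> real) \<Rightarrow> bool" where
  "is_LNE I p \<longleftrightarrow>
     (\<forall>i<nS I. p i \<in> {0..vbar I} \<and>
        (\<exists>U. open U \<and> p i \<in> U \<and> (\<forall>q\<in>closure U. revenue I (p(i := q)) i \<le> revenue I p i)))"

definition restrict_prices :: "nat set \<Rightarrow> (nat \<Rightarrow> real) \<Rightarrow> nat \<Rightarrow> real" where
  "restrict_prices S p = (\<lambda>j. if j \<in> S then p j else 0)"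

definition pmin :: "clc_instance \<Rightarrow> nat set \<Rightarrow> (nat \<Rightarrow> real) \<Rightarrow> real" where
  "pmin I S p = (if S = {} then vbar I else Min (p ` S))"

definition local_max_on :: "(real \<Rightarrow> real) \<Rightarrow> real set \<Rightarrow> real \<Rightarrow> bool" where
  "local_max_on f A x \<longleftrightarrow> x \<in> A \<and> (\<exists>d>0. \<forall>y\<in>A. \<bar>y - x\<bar> < d \<longrightarrow> f y \<le> f x)"

text \<open>Valid order-price pair; ranks are 0-based: pi l is the seller of rank l+1.\<close>
definition is_VOP :: "clc_instance \<Rightarrow> (nat \<Rightarrow> nat) \<Rightarrow> (nat \<Rightarrow> real) \<Rightarrow> bool" where
  "is_VOP I \<pi> p \<longleftrightarrow>
     bij_betw \<pi> {..<nS I} {..<nS I} \<and>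
     (\<forall>i<nS I. p i \<in> {0..vbar I}) \<and>
     (\<forall>l. Suc l < nS I \<longrightarrow> p (\<pi> (Suc l)) \<le> p (\<pi> l)) \<and>
     (\<forall>l<nS I.
        local_max_on (\<lambda>q. revenue I ((restrict_prices (\<pi> ` {..<l}) p)(\<pi> l := q)) (\<pi> l))
                     {0..pmin I (\<pi> ` {..<l}) p} (p (\<pi> l)))"

end

theory Submission
  imports Defs
begin

text \<open>Counterexample: two sellers, no non-price attributes, willingness-to-pay uniform on
  \<open>[0, 1]\<close>, ties broken in favour of seller 1. At the common price \<open>1/2\<close> seller 0, ranked first
  and facing seller 1 at price 0, never sells, so any price is a local maximum for it; seller 1,
  capped at \<open>1/2\<close>, maximises \<open>q (1 - q)\<close> on \<open>[0, 1/2]\<close> at \<open>1/2\<close>. In the actual game, however,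
  seller 0 loses every tie at \<open>1/2\<close> and gains positive revenue by undercutting slightly.\<close>

definition two_sellers :: clc_instance where
  "two_sellers = \<lparr> nS = 2, nK = 0, vbar = 1, attr = (\<lambda>_ _. 0), nseg = 1, wt = (\<lambda>_. 1),
     aord = (\<lambda>_. [0]), pref = (\<lambda>_ _ _ _. True), adm = (\<lambda>_. UNIV),
     tb = (\<lambda>_. [1, 0]), dens = (\<lambda>_ _. 1) \<rparr>"

lemma before_singleton: "\<not> before [x] a b"
  unfolding before_def by auto

lemma before_pair: "before [x, y] a b \<longleftrightarrow> a = x \<and> b = y"
proof
  assume "before [x, y] a b"
  then obtain m n where "m < n" "n < 2" "[x, y] ! m = a" "[x, y] ! n = b"
    unfolding before_def by auto
  moreover from \<open>m < n\<close> \<open>n < 2\<close> have "m = 0" "n = 1" by auto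
  ultimately show "a = x \<and> b = y" by simp
next
  assume "a = x \<and> b = y"
  then show "before [x, y] a b"
    unfolding before_def by (intro exI[of _ 0] exI[of _ 1]) simp
qed

lemma valid_clc_two_sellers: "valid_clc two_sellers"
proof -
  have "((\<lambda>_::real. 1::real) has_integral 1) {0..1}"
    using has_integral_const_real[of "1::real" 0 1] by simp
  moreover have "0-lipschitz_on {0..1} (\<lambda>_::real. 1::real)"
    by (simp add: lipschitz_on_def)
  ultimately show ?thesis
    unfolding valid_clc_def by (auto simp: two_sellers_def)
qed

lemma ranked_above_two_sellers:
  "ranked_above two_sellers s p i j \<longleftrightarrow> p i < p j \<or> (p i = p j \<and> i = 1 \<and> j = 0)"
proof -
  have "lex_prefers two_sellers s p i j \<longleftrightarrow> p i < p j" for i j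
    unfolding lex_prefers_def
    by (auto simp: two_sellers_def before_singleton sbetter_def aval_def)
  then show ?thesis
    unfolding ranked_above_def by (auto simp: two_sellers_def before_pair)
qed

lemma buys_two_sellers:
  "buys two_sellers s w p 0 \<longleftrightarrow> p 0 \<le> w \<and> (p 1 \<le> w \<longrightarrow> p 0 < p 1)"
  "buys two_sellers s w p 1 \<longleftrightarrow> p 1 \<le> w \<and> (p 0 \<le> w \<longrightarrow> p 1 \<le> p 0)"
proof -
  have consider_eq: "consider_set two_sellers s w p = {i. i < 2 \<and> p i \<le> w}"
    unfolding consider_set_def by (simp add: two_sellers_def)
  show "buys two_sellers s w p 0 \<longleftrightarrow> p 0 \<le> w \<and> (p 1 \<le> w \<longrightarrow> p 0 < p 1)"
    unfolding buys_def consider_eq ranked_above_two_sellers by (auto simp: less_2_cases_iff)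
  show "buys two_sellers s w p 1 \<longleftrightarrow> p 1 \<le> w \<and> (p 0 \<le> w \<longrightarrow> p 1 \<le> p 0)"
    unfolding buys_def consider_eq ranked_above_two_sellers
    by (auto simp: less_2_cases_iff le_less)
qed

lemma demand_two_sellers:
  "demand two_sellers p i = integral {w \<in> {0..1}. buys two_sellers 0 w p i} (\<lambda>_. 1)"
  unfolding demand_def by (simp add: two_sellers_def)

lemma demand_seller0:
  assumes "0 \<le> p 0" "p 0 \<le> 1"
  shows "demand two_sellers p 0 = (if p 0 < p 1 then 1 - p 0 else 0)"
proof -
  have "{w \<in> {0..1}. buys two_sellers 0 w p 0} = (if p 0 < p 1 then {p 0..1} else {})"
    using assms by (auto simp: buys_two_sellers)
  then show ?thesis
    using assms by (simp add: demand_two_sellers)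
qed

lemma demand_seller1_undercut:
  assumes "0 \<le> p 1" "p 1 \<le> p 0" "p 1 \<le> 1"
  shows "demand two_sellers p 1 = 1 - p 1"
proof -
  have "{w \<in> {0..1}. buys two_sellers 0 w p 1} = {p 1..1}"
    using assms by (auto simp: buys_two_sellers[unfolded One_nat_def])
  then show ?thesis
    using assms by (simp add: demand_two_sellers)
qed

lemma is_VOP_two_sellers_half: "is_VOP two_sellers id (\<lambda>_. 1/2)"
proof -
  define p :: "nat \<Rightarrow> real" where "p = (\<lambda>_. 1/2)"
  have rank0: "local_max_on (\<lambda>q. revenue two_sellers ((restrict_prices {} p)(0 := q)) 0)
                 {0..pmin two_sellers {} p} (p 0)"
  proof -
    have "revenue two_sellers ((restrict_prices {} p)(0 := q)) 0 = 0"
      if "q \<in> {0..1}" for q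
      using that by (simp add: revenue_def demand_seller0 restrict_prices_def)
    then show ?thesis
      unfolding local_max_on_def by (auto simp: pmin_def two_sellers_def p_def intro!: exI[of _ 1])
  qed
  have rank1: "local_max_on (\<lambda>q. revenue two_sellers ((restrict_prices {0} p)(1 := q)) 1)
                 {0..pmin two_sellers {0} p} (p 1)"
  proof -
    have revenue_eq: "revenue two_sellers ((restrict_prices {0} p)(1 := q)) 1 = q * (1 - q)"
      if "q \<in> {0..1/2}" for q
      using that demand_seller1_undercut[of "(restrict_prices {0} p)(1 := q)"]
      by (simp add: revenue_def restrict_prices_def p_def)
    have "y * (1 - y) \<le> 1/2 * (1 - 1/2)" for y :: real
      using sum_power2_ge_zero[of "y - 1/2" 0] by (simp add: algebra_simps power2_eq_square)
    then have "\<forall>y\<in>{0..1/2}. revenue two_sellers ((restrict_prices {0} p)(1 := y)) 1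
                 \<le> revenue two_sellers ((restrict_prices {0} p)(1 := 1/2)) 1"
      by (simp add: revenue_eq del: One_nat_def)
    moreover have "pmin two_sellers {0} p = 1/2" "p 1 = 1/2"
      by (simp_all add: pmin_def p_def)
    ultimately show ?thesis
      unfolding local_max_on_def by (metis atLeastAtMost_iff order.refl zero_less_one
        divide_nonneg_pos zero_le_one zero_less_numeral)
  qed
  have ranks: "l < 2 \<Longrightarrow> l = 0 \<or> l = 1" for l :: nat
    by auto
  show ?thesis
    unfolding is_VOP_def p_def[symmetric]
    using rank0 rank1 by (auto simp: two_sellers_def p_def lessThan_Suc dest!: ranks)
qed

lemma not_is_LNE_two_sellers_tie:
  assumes tie: "p 0 = p 1" and pos: "0 < p 0" and le1: "p 0 \<le> 1"
  shows "\<not> is_LNE two_sellers p"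
proof
  assume "is_LNE two_sellers p"
  then obtain U where U: "open U" "p 0 \<in> U"
    and no_gain: "\<forall>q\<in>closure U. revenue two_sellers (p(0 := q)) 0 \<le> revenue two_sellers p 0"
    unfolding is_LNE_def two_sellers_def by force
  obtain e where "e > 0" "ball (p 0) e \<subseteq> U"
    using U open_contains_ball_eq by blast
  define q where "q = max (p 0 / 2) (p 0 - e / 2)"
  have q: "0 < q" "q < p 0"
    using \<open>e > 0\<close> pos unfolding q_def by auto
  have "q \<in> ball (p 0) e"
    using \<open>e > 0\<close> pos by (auto simp: q_def dist_real_def)
  then have "q \<in> closure U"
    using \<open>ball (p 0) e \<subseteq> U\<close> closure_subset by blast
  moreover have "revenue two_sellers p 0 = 0"
    using tie pos le1 by (simp add: revenue_def demand_seller0)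
  moreover have "revenue two_sellers (p(0 := q)) 0 = q * (1 - q)"
    using q tie le1 by (simp add: revenue_def demand_seller0)
  moreover have "q * (1 - q) > 0"
    using q le1 by simp
  ultimately show False
    using no_gain by fastforce
qed

theorem proposition4p2:
  shows "\<exists>I \<pi> p. valid_clc I \<and> is_VOP I \<pi> p \<and> \<not> is_LNE I p"
  using valid_clc_two_sellers is_VOP_two_sellers_half
    not_is_LNE_two_sellers_tie[of "\<lambda>_. 1/2"] by auto

end
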